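(* There exist $R_0>0$ (with $R_0\ll\sqrt{3/(4\pi)}$) and $C>0$ such that for every $0<R<R_0$ there is a continuous solution $(m_R,\rho_R):[0,R]\to\mathbb{R}^2$ of the system $$\frac{dm}{dr}=4\pi r^2\rho,\qquad \frac{d\rho}{dr}=-\frac{2\rho-1}{r-2m}\Big[4\pi r^2(\rho-1)+\frac{m}{r}\Big],$$ with $\rho_R$ monotone decreasing and $m_R$ monotone increasing on $[0,R]$, and such that $$1\le\rho_R(r)\le 1+CR^2,\quad \rho_R(R)=1,\qquad m_R(0)=0,\quad 1\le \frac{3}{4\pi}\frac{m_R(r)}{r^3}\le 1+CR^2,$$ where $C$ is independent of $R$.
   Context: The system is the Tolman–Oppenheimer–Volkoff system for a static spherically symmetric barotropic fluid with equation of state $p=\rho-1$ (units with critical density $1$); $m$ is the Hawking mass and $\rho$ the energy density, as functions of the area radius $r$. Such solutions are called (small) static hard stars of radius $R$. *)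

theory Defs
  imports "HOL-Analysis.Analysis"
begin

text \<open>Right-hand sides of the TOV system for the hard-star equation of state p = rho - 1.\<close>

definition tov_m_rhs :: "real \<Rightarrow> real \<Rightarrow> real \<Rightarrow> real" where
  "tov_m_rhs r m \<rho> = 4 * pi * r^2 * \<rho>"

definition tov_rho_rhs :: "real \<Rightarrow> real \<Rightarrow> real \<Rightarrow> real" where
  "tov_rho_rhs r m \<rho> = - ((2 * \<rho> - 1) / (r - 2 * m)) * (4 * pi * r^2 * (\<rho> - 1) + m / r)"

end

theory Submission
  imports Defs
begin

text \<open>Integrating inwards from the surface, a hard star of radius \<open>R\<close> is a fixed point of
  \<open>\<rho> \<mapsto> 1 + \<integral>\<^sub>r\<^sup>R G(\<rho>)\<close>, where \<open>G(\<rho>) = -d\<rho>/dr\<close> is evaluated with the mass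
  \<open>m(r) = \<integral>\<^sub>0\<^sup>r 4\<pi>s\<^sup>2\<rho>(s) ds\<close>. For \<open>r \<le> 1/100\<close> and \<open>1 \<le> \<rho> \<le> 2\<close> one has \<open>m \<le> 9r\<^sup>3\<close>,
  so \<open>r - 2m > 0\<close> and \<open>G = r K(\<rho>, m/r\<^sup>3, r\<^sup>2)\<close> with a kernel \<open>K\<close> that is nonnegative,
  bounded by 132 and Lipschitz with constant 300. The integral operator therefore maps densities
  with \<open>1 \<le> \<rho> \<le> 2\<close> to densities with \<open>1 \<le> \<rho> \<le> 1 + 132R\<^sup>2\<close> and contracts by \<open>300R\<^sup>2 \<le> 1/20\<close>,
  so Banach's fixed-point theorem yields the star. Monotonicity of \<open>\<rho>\<close> comes from \<open>G \<ge> 0\<close>,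
  and the bounds on the mean density \<open>3m/(4\<pi>r\<^sup>3)\<close> from integrating the bounds on \<open>\<rho>\<close>.\<close>

definition tov_rho_kernel :: "real \<Rightarrow> real \<Rightarrow> real \<Rightarrow> real" where
  "tov_rho_kernel \<rho> q t = (2*\<rho>-1) * (4*pi*(\<rho>-1) + q) * (1 / (1 - 2*q*t))"

lemma minus_tov_rho_rhs_eq_kernel:
  fixes s m \<rho> :: real
  assumes "0 < s" "1 - 2*(m/s^3)* s^2 \<noteq> 0"
  shows "- tov_rho_rhs s m \<rho> = s * tov_rho_kernel \<rho> (m/s^3) (s^2)"
proof -
  define q where "q = m/s^3"
  define D where "D = 1 - 2*q* s^2"
  have "D \<noteq> 0" using assms(2) unfolding D_def q_def .
  have m: "m = q * s^3" using assms(1) unfolding q_def by simp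
  have "s - 2*m = s * D" unfolding D_def m by (simp add: algebra_simps power3_eq_cube power2_eq_square)
  moreover have "m/s = s^2 * q" unfolding m using assms(1) by (simp add: power3_eq_cube power2_eq_square)
  ultimately have "- tov_rho_rhs s m \<rho> = ((2*\<rho>-1)/(s*D)) * (4*pi* s^2*(\<rho>-1) + s^2*q)"
    unfolding tov_rho_rhs_def by simp
  also have "\<dots> = s * ((2*\<rho>-1) * (4*pi*(\<rho>-1)+q) * (1/D))"
    using \<open>D \<noteq> 0\<close> assms(1) by (simp add: field_simps power2_eq_square)
  finally show ?thesis unfolding tov_rho_kernel_def D_def q_def .
qed

lemma tov_kernel_denominator_bounds:
  fixes q t :: real
  assumes "0 \<le> q" "q \<le> 9" "0 \<le> t" "t \<le> 1/10000"
  shows "1 \<le> 1/(1-2*q*t)" "1/(1-2*q*t) \<le> 2"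
proof -
  have "q*t \<le> 9 * (1/10000)" using assms by (intro mult_mono) auto
  moreover have "0 \<le> q*t" using assms by simp
  ultimately have "1/2 \<le> 1-2*q*t" "1-2*q*t \<le> 1" by auto
  then show "1 \<le> 1/(1-2*q*t)" "1/(1-2*q*t) \<le> 2" by (simp_all add: field_simps)
qed

lemma tov_kernel_factor_bounds:
  fixes \<rho> q :: real
  assumes "1 \<le> \<rho>" "\<rho> \<le> 2" "0 \<le> q" "q \<le> 9"
  shows "0 \<le> 4*pi*(\<rho>-1) + q" "4*pi*(\<rho>-1) + q \<le> 22"
proof -
  have "pi*(\<rho>-1) \<le> 16/5 * 1" using assms pi_approx(2) by (intro mult_mono) auto
  then show "4*pi*(\<rho>-1) + q \<le> 22" using assms by simp
  show "0 \<le> 4*pi*(\<rho>-1) + q" using assms by simp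
qed

lemma tov_rho_kernel_bounds:
  assumes "1 \<le> \<rho>" "\<rho> \<le> 2" "0 \<le> q" "q \<le> 9" "0 \<le> t" "t \<le> 1/10000"
  shows "0 \<le> tov_rho_kernel \<rho> q t" "tov_rho_kernel \<rho> q t \<le> 132"
proof -
  note W = tov_kernel_denominator_bounds[OF assms(3-6)]
  note Q = tov_kernel_factor_bounds[OF assms(1-4)]
  have P: "1 \<le> 2*\<rho>-1" "2*\<rho>-1 \<le> 3" using assms by auto
  show "0 \<le> tov_rho_kernel \<rho> q t"
    unfolding tov_rho_kernel_def using P Q W by (intro mult_nonneg_nonneg) linarith+
  have "tov_rho_kernel \<rho> q t \<le> 3 * 22 * 2"
    unfolding tov_rho_kernel_def using P Q W by (intro mult_mono mult_nonneg_nonneg) linarith+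
  then show "tov_rho_kernel \<rho> q t \<le> 132" by simp
qed

lemma abs_diff_triple_product_le:
  fixes a1 a2 b1 b2 c1 c2 :: real
  assumes "\<bar>a1-a2\<bar> \<le> da" "\<bar>b1-b2\<bar> \<le> db" "\<bar>c1-c2\<bar> \<le> dc"
    "0 \<le> b1" "b1 \<le> B" "0 \<le> c1" "c1 \<le> C" "0 \<le> a2" "a2 \<le> A" "0 \<le> b2" "b2 \<le> B"
  shows "\<bar>a1*b1*c1 - a2*b2*c2\<bar> \<le> da*B*C + A*db*C + A*B*dc"
proof -
  have "a1*b1*c1 - a2*b2*c2 = (a1-a2)*b1*c1 + a2*(b1-b2)*c1 + a2*b2*(c1-c2)"
    by (simp add: algebra_simps)
  moreover have "\<bar>(a1-a2)*b1*c1\<bar> \<le> da*B*C" "\<bar>a2*(b1-b2)*c1\<bar> \<le> A*db*C" "\<bar>a2*b2*(c1-c2)\<bar> \<le> A*B*dc"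
    unfolding abs_mult using assms by (intro mult_mono; auto)+
  ultimately show ?thesis by linarith
qed

lemma tov_rho_kernel_lipschitz:
  fixes d :: real
  assumes "1 \<le> \<rho>1" "\<rho>1 \<le> 2" "0 \<le> q1" "q1 \<le> 9"
    "1 \<le> \<rho>2" "\<rho>2 \<le> 2" "0 \<le> q2" "q2 \<le> 9" "0 \<le> t" "t \<le> 1/10000"
    "\<bar>\<rho>1-\<rho>2\<bar> \<le> d" "\<bar>q1-q2\<bar> \<le> 5*d"
  shows "\<bar>tov_rho_kernel \<rho>1 q1 t - tov_rho_kernel \<rho>2 q2 t\<bar> \<le> 300 * d"
proof -
  note W1 = tov_kernel_denominator_bounds[OF assms(3,4,9,10)]
  note W2 = tov_kernel_denominator_bounds[OF assms(7,8,9,10)]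
  note Q1 = tov_kernel_factor_bounds[OF assms(1-4)]
  note Q2 = tov_kernel_factor_bounds[OF assms(5-8)]
  have "0 \<le> d" using assms(11) by linarith
  have dP: "\<bar>(2*\<rho>1-1) - (2*\<rho>2-1)\<bar> \<le> 2*d" using assms by linarith
  have "\<bar>4*pi*(\<rho>1-\<rho>2)\<bar> \<le> 13 * d"
    unfolding abs_mult using pi_approx(2) assms(11) \<open>0 \<le> d\<close> by (intro mult_mono) auto
  then have dQ: "\<bar>(4*pi*(\<rho>1-1)+q1) - (4*pi*(\<rho>2-1)+q2)\<bar> \<le> 18*d"
    using assms(12) by (simp add: algebra_simps)
  have "0 < 1/(1-2*q1*t)" "0 < 1/(1-2*q2*t)" using W1(1) W2(1) by linarith+
  then have pos: "1-2*q1*t > 0" "1-2*q2*t > 0" by (simp_all only: zero_less_divide_1_iff)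
  have "1/(1-2*q1*t) - 1/(1-2*q2*t) = 2*t*(q1-q2) * (1/(1-2*q1*t)) * (1/(1-2*q2*t))"
    using pos by (simp add: field_simps)
  also have "\<bar>\<dots>\<bar> \<le> (2*(1/10000)*(5*d))*2*2"
    unfolding abs_mult using assms W1 W2 pos \<open>0 \<le> d\<close> by (intro mult_mono) auto
  finally have dW: "\<bar>1/(1-2*q1*t) - 1/(1-2*q2*t)\<bar> \<le> d" using \<open>0 \<le> d\<close> by simp
  have "\<bar>tov_rho_kernel \<rho>1 q1 t - tov_rho_kernel \<rho>2 q2 t\<bar> \<le> (2*d)*22*2 + 3*(18*d)*2 + 3*22*d"
    unfolding tov_rho_kernel_def using assms Q1 Q2 W1 W2
    by (intro abs_diff_triple_product_le[OF dP dQ dW]) linarith+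
  then show ?thesis by simp
qed

lemma tov_kernel_arguments:
  fixes s m :: real
  assumes "0 < s" "s \<le> 1/100" "0 \<le> m" "m \<le> 9* s^3"
  shows "0 \<le> m/s^3" "m/s^3 \<le> 9" "s^2 \<le> 1/10000" "1 - 2*(m/s^3)* s^2 \<noteq> 0"
proof -
  show q0: "0 \<le> m/s^3" using assms by simp
  show q9: "m/s^3 \<le> 9" using assms by (simp add: field_simps)
  have "s^2 \<le> (1/100)^2" using assms by (intro power_mono) auto
  then show t1: "s^2 \<le> 1/10000" by (simp add: power2_eq_square)
  show "1 - 2*(m/s^3)* s^2 \<noteq> 0"
  proof
    assume "1 - 2*(m/s^3)* s^2 = 0"
    with tov_kernel_denominator_bounds(1)[OF q0 q9 zero_le_power2 t1] show False by (simp only: div_by_0)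
  qed
qed

lemma minus_tov_rho_rhs_bounds:
  fixes s m \<rho> :: real
  assumes "0 < s" "s \<le> 1/100" "0 \<le> m" "m \<le> 9* s^3" "1 \<le> \<rho>" "\<rho> \<le> 2"
  shows "0 \<le> - tov_rho_rhs s m \<rho>" "- tov_rho_rhs s m \<rho> \<le> 132 * s"
proof -
  note q = tov_kernel_arguments[OF assms(1-4)]
  note k = tov_rho_kernel_bounds[OF assms(5,6) q(1,2) zero_le_power2 q(3)]
  show "0 \<le> - tov_rho_rhs s m \<rho>" "- tov_rho_rhs s m \<rho> \<le> 132 * s"
    unfolding minus_tov_rho_rhs_eq_kernel[OF assms(1) q(4)] using k assms(1)
    by (simp_all add: mult.commute)
qed

lemma tov_rho_rhs_lipschitz:
  fixes s m1 m2 \<rho>1 \<rho>2 d :: real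
  assumes "0 < s" "s \<le> 1/100" "0 \<le> m1" "m1 \<le> 9* s^3" "1 \<le> \<rho>1" "\<rho>1 \<le> 2"
    "0 \<le> m2" "m2 \<le> 9* s^3" "1 \<le> \<rho>2" "\<rho>2 \<le> 2"
    "\<bar>\<rho>1-\<rho>2\<bar> \<le> d" "\<bar>m1-m2\<bar> \<le> 5* s^3*d"
  shows "\<bar>tov_rho_rhs s m1 \<rho>1 - tov_rho_rhs s m2 \<rho>2\<bar> \<le> 300 * s * d"
proof -
  note q1 = tov_kernel_arguments[OF assms(1-4)]
  note q2 = tov_kernel_arguments[OF assms(1,2,7,8)]
  have "\<bar>m1/s^3 - m2/s^3\<bar> = \<bar>m1-m2\<bar>/s^3" using assms by (simp add: diff_divide_distrib[symmetric])
  also have "\<dots> \<le> 5*d" using assms by (simp add: field_simps)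
  finally have "\<bar>m1/s^3 - m2/s^3\<bar> \<le> 5*d" .
  then have k: "\<bar>tov_rho_kernel \<rho>1 (m1/s^3) (s^2) - tov_rho_kernel \<rho>2 (m2/s^3) (s^2)\<bar> \<le> 300*d"
    using tov_rho_kernel_lipschitz[OF assms(5,6) q1(1,2) assms(9,10) q2(1,2) zero_le_power2 q1(3) assms(11)]
    by blast
  have "\<bar>tov_rho_rhs s m1 \<rho>1 - tov_rho_rhs s m2 \<rho>2\<bar> = \<bar>(- tov_rho_rhs s m1 \<rho>1) - (- tov_rho_rhs s m2 \<rho>2)\<bar>"
    by linarith
  also have "\<dots> = s * \<bar>tov_rho_kernel \<rho>1 (m1/s^3) (s^2) - tov_rho_kernel \<rho>2 (m2/s^3) (s^2)\<bar>"
    unfolding minus_tov_rho_rhs_eq_kernel[OF assms(1) q1(4)] minus_tov_rho_rhs_eq_kernel[OF assms(1) q2(4)]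
    using assms(1) by (simp add: abs_mult right_diff_distrib[symmetric])
  also have "\<dots> \<le> s * (300*d)" using k assms(1) by (intro mult_left_mono) auto
  finally show ?thesis by simp
qed

definition tov_mass :: "(real \<Rightarrow> real) \<Rightarrow> real \<Rightarrow> real" where
  "tov_mass \<rho> r = integral {0..r} (\<lambda>s. 4*pi * s^2 * \<rho> s)"

lemma has_integral_scaled_square:
  fixes b c :: real
  assumes "0 \<le> b"
  shows "((\<lambda>s. c * s^2) has_integral c * b^3 / 3) {0..b}"
proof -
  have "((\<lambda>s. c * s^3 / 3) has_vector_derivative c * x^2) (at x within {0..b})" for x
    unfolding has_real_derivative_iff_has_vector_derivative[symmetric]
    by (auto intro!: derivative_eq_intros simp: power2_eq_square)
  from fundamental_theorem_of_calculus[OF assms this] show ?thesis by simp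
qed

lemma tov_mass_integrable:
  assumes "continuous_on {0..R} \<rho>" "0 \<le> a" "b \<le> R"
  shows "(\<lambda>s. 4*pi * s^2 * \<rho> s) integrable_on {a..b}"
proof -
  have "continuous_on {0..R} (\<lambda>s. 4*pi * s^2 * \<rho> s)" using assms by (intro continuous_intros)
  then have "continuous_on {a..b} (\<lambda>s. 4*pi * s^2 * \<rho> s)"
    by (rule continuous_on_subset) (use assms in auto)
  then show ?thesis by (rule integrable_continuous_interval)
qed

lemma tov_mass_bounds:
  assumes "continuous_on {0..R} \<rho>" "r \<in> {0..R}" "\<And>s. s \<in> {0..r} \<Longrightarrow> lo \<le> \<rho> s \<and> \<rho> s \<le> hi"
  shows "4*pi/3 * lo * r^3 \<le> tov_mass \<rho> r" "tov_mass \<rho> r \<le> 4*pi/3 * hi * r^3"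
proof -
  have i: "(\<lambda>s. 4*pi * s^2 * \<rho> s) integrable_on {0..r}" using assms by (intro tov_mass_integrable) auto
  have r0: "0 \<le> r" using assms by auto
  note l = has_integral_scaled_square[OF r0, of "4*pi*lo"]
  note h = has_integral_scaled_square[OF r0, of "4*pi*hi"]
  have "(4*pi*x^2) * lo \<le> (4*pi*x^2) * \<rho> x" "(4*pi*x^2) * \<rho> x \<le> (4*pi*x^2) * hi"
    if "x \<in> {0..r}" for x
    using assms(3)[OF that] by (intro mult_left_mono; simp)+
  then have "4*pi*lo * x^2 \<le> 4*pi * x^2 * \<rho> x" "4*pi * x^2 * \<rho> x \<le> 4*pi*hi * x^2"
    if "x \<in> {0..r}" for x
    using that by (simp_all add: mult_ac)
  then have "4*pi*lo * r^3 / 3 \<le> tov_mass \<rho> r" "tov_mass \<rho> r \<le> 4*pi*hi * r^3 / 3"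
    unfolding tov_mass_def using has_integral_le[OF l integrable_integral[OF i]]
      has_integral_le[OF integrable_integral[OF i] h] by blast+
  then show "4*pi/3 * lo * r^3 \<le> tov_mass \<rho> r" "tov_mass \<rho> r \<le> 4*pi/3 * hi * r^3"
    by simp_all
qed

lemma tov_mass_lipschitz:
  assumes "continuous_on {0..R} \<rho>" "continuous_on {0..R} \<sigma>" "r \<in> {0..R}"
    "\<And>s. s \<in> {0..R} \<Longrightarrow> \<bar>\<rho> s - \<sigma> s\<bar> \<le> d"
  shows "\<bar>tov_mass \<rho> r - tov_mass \<sigma> r\<bar> \<le> 4*pi/3 * d * r^3"
proof -
  have i1: "(\<lambda>s. 4*pi * s^2 * \<rho> s) integrable_on {0..r}"
    and i2: "(\<lambda>s. 4*pi * s^2 * \<sigma> s) integrable_on {0..r}"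
    using assms by (auto intro: tov_mass_integrable)
  have r0: "0 \<le> r" using assms by auto
  note h = has_integral_scaled_square[OF r0, of "4*pi*d"]
  have "norm (4*pi * x^2 * \<rho> x - 4*pi * x^2 * \<sigma> x) \<le> 4*pi*d * x^2" if "x \<in> {0..r}" for x
  proof -
    have "norm (4*pi * x^2 * \<rho> x - 4*pi * x^2 * \<sigma> x) = (4*pi * x^2) * \<bar>\<rho> x - \<sigma> x\<bar>"
      by (simp add: abs_mult right_diff_distrib[symmetric])
    also have "\<dots> \<le> (4*pi * x^2) * d" using assms(3,4) that by (intro mult_left_mono) auto
    finally show ?thesis by (simp add: mult_ac)
  qed
  then have "norm (integral {0..r} (\<lambda>s. 4*pi * s^2 * \<rho> s - 4*pi * s^2 * \<sigma> s))
      \<le> integral {0..r} (\<lambda>s. 4*pi*d * s^2)"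
    using h by (intro integral_norm_bound_integral integrable_diff[OF i1 i2]) auto
  also have "\<dots> = 4*pi/3 * d * r^3" using integral_unique[OF h] by simp
  finally show ?thesis unfolding tov_mass_def integral_diff[OF i1 i2, symmetric] by simp
qed

lemma tov_mass_has_derivative:
  assumes "continuous_on {0..R} \<rho>" "r \<in> {0..R}"
  shows "(tov_mass \<rho> has_real_derivative 4*pi * r^2 * \<rho> r) (at r within {0..R})"
  unfolding tov_mass_def using assms by (intro integral_has_real_derivative continuous_intros)

lemma tov_mass_continuous:
  assumes "continuous_on {0..R} \<rho>" "0 \<le> R"
  shows "continuous_on {0..R} (tov_mass \<rho>)"
  unfolding tov_mass_def using tov_mass_integrable[OF assms(1), of 0 R] assms(2)
  by (intro indefinite_integral_continuous_1) auto

lemma tov_mass_mono: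
  assumes "continuous_on {0..R} \<rho>" "\<And>s. s \<in> {0..R} \<Longrightarrow> 0 \<le> \<rho> s"
  shows "mono_on {0..R} (tov_mass \<rho>)"
proof (rule mono_onI)
  fix x y assume "x \<in> {0..R}" "y \<in> {0..R}" "x \<le> y"
  then show "tov_mass \<rho> x \<le> tov_mass \<rho> y"
    unfolding tov_mass_def using assms(2)
    by (intro integral_subset_le tov_mass_integrable[OF assms(1)]) auto
qed

definition tov_rho_decay :: "(real \<Rightarrow> real) \<Rightarrow> real \<Rightarrow> real" where
  "tov_rho_decay \<rho> s = - tov_rho_rhs s (tov_mass \<rho> s) (\<rho> s)"

definition admissible_density :: "real \<Rightarrow> (real \<Rightarrow> real) \<Rightarrow> bool" where
  "admissible_density R \<rho> \<longleftrightarrow> continuous_on {0..R} \<rho> \<and> (\<forall>x\<in>{0..R}. 1 \<le> \<rho> x \<and> \<rho> x \<le> 2)"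

lemma admissible_density_continuous: "admissible_density R \<rho> \<Longrightarrow> continuous_on {0..R} \<rho>"
  unfolding admissible_density_def by auto

lemma admissible_density_bounds:
  "admissible_density R \<rho> \<Longrightarrow> x \<in> {0..R} \<Longrightarrow> 1 \<le> \<rho> x"
  "admissible_density R \<rho> \<Longrightarrow> x \<in> {0..R} \<Longrightarrow> \<rho> x \<le> 2"
  unfolding admissible_density_def by auto

lemma tov_mass_admissible_bounds:
  assumes "admissible_density R \<rho>" "s \<in> {0..R}"
  shows "0 \<le> tov_mass \<rho> s" "tov_mass \<rho> s \<le> 9 * s^3"
proof -
  have "4*pi/3 * 1 * s^3 \<le> tov_mass \<rho> s" "tov_mass \<rho> s \<le> 4*pi/3 * 2 * s^3"
    using tov_mass_bounds[OF admissible_density_continuous[OF assms(1)] assms(2), of 1 2]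
      admissible_density_bounds[OF assms(1)] assms(2) by auto
  moreover have "0 \<le> 4*pi/3 * 1 * s^3" "4*pi/3 * 2 * s^3 \<le> 9 * s^3"
    using assms(2) pi_approx(2) by (auto intro!: mult_right_mono)
  ultimately show "0 \<le> tov_mass \<rho> s" "tov_mass \<rho> s \<le> 9 * s^3" by linarith+
qed

lemma continuous_within_zero_if_linear_bound:
  fixes g :: "real \<Rightarrow> real"
  assumes "g 0 = 0" "\<And>y. y \<in> S \<Longrightarrow> \<bar>g y\<bar> \<le> c * \<bar>y\<bar>"
  shows "continuous (at 0 within S) g"
proof -
  have "((\<lambda>y. c * \<bar>y\<bar>) \<longlongrightarrow> 0) (at 0 within S)"
    by (auto intro!: tendsto_eq_intros)
  then have "(g \<longlongrightarrow> 0) (at 0 within S)"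
    using assms(2) by (intro Lim_null_comparison[of g "\<lambda>y. c * \<bar>y\<bar>"]) (auto simp: eventually_at_filter)
  then show ?thesis unfolding continuous_within assms(1) .
qed

definition clamp_radius :: "real \<Rightarrow> real \<Rightarrow> real" where
  "clamp_radius R x = max 0 (min R x)"

definition picard_map :: "real \<Rightarrow> (real \<Rightarrow> real) \<Rightarrow> real \<Rightarrow> real" where
  "picard_map R \<rho> x = 1 + integral {clamp_radius R x..R} (tov_rho_decay \<rho>)"

text \<open>Densities on \<open>[0, R]\<close>, extended constantly outside, so that they form a closed subset
  of the Banach space of bounded continuous functions on the real line.\<close>

definition clamped_densities :: "real \<Rightarrow> (real \<Rightarrow>\<^sub>C real) set" where
  "clamped_densities R = {F :: real \<Rightarrow>\<^sub>C real. \<forall>x. F x = F (clamp_radius R x) \<and> 1 \<le> F x \<and> F x \<le> 2}"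

definition picard_bcontfun :: "real \<Rightarrow> (real \<Rightarrow>\<^sub>C real) \<Rightarrow> (real \<Rightarrow>\<^sub>C real)" where
  "picard_bcontfun R F = Bcontfun (picard_map R F)"

definition static_hard_star :: "real \<Rightarrow> real \<Rightarrow> (real \<Rightarrow> real) \<Rightarrow> (real \<Rightarrow> real) \<Rightarrow> bool" where
  "static_hard_star R C m \<rho> \<longleftrightarrow>
     continuous_on {0..R} m \<and> continuous_on {0..R} \<rho> \<and>
     (\<forall>r \<in> {0<..R}.
        (m has_real_derivative tov_m_rhs r (m r) (\<rho> r)) (at r within {0..R}) \<and>
        (\<rho> has_real_derivative tov_rho_rhs r (m r) (\<rho> r)) (at r within {0..R})) \<and>
     antimono_on {0..R} \<rho> \<and> mono_on {0..R} m \<and>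
     (\<forall>r \<in> {0..R}. 1 \<le> \<rho> r \<and> \<rho> r \<le> 1 + C * R^2) \<and>
     \<rho> R = 1 \<and> m 0 = 0 \<and>
     (\<forall>r \<in> {0<..R}. 1 \<le> 3 / (4 * pi) * (m r / r^3) \<and> 3 / (4 * pi) * (m r / r^3) \<le> 1 + C * R^2)"

lemma clamp_radius_in_interval: "0 \<le> R \<Longrightarrow> clamp_radius R x \<in> {0..R}"
  unfolding clamp_radius_def by auto

lemma clamp_radius_eq_self: "x \<in> {0..R} \<Longrightarrow> clamp_radius R x = x"
  unfolding clamp_radius_def by auto

lemma continuous_on_eval_bcontfun: "continuous_on UNIV (\<lambda>F::real \<Rightarrow>\<^sub>C real. F x)"
  unfolding continuous_on_iff
proof (intro ballI allI impI)
  fix F :: "real \<Rightarrow>\<^sub>C real" and e :: real assume "0 < e"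
  then show "\<exists>d>0. \<forall>G\<in>UNIV. dist G F < d \<longrightarrow> dist (G x) (F x) < e"
    using dist_bounded le_less_trans by blast
qed

lemma closed_clamped_densities: "closed (clamped_densities R)"
  unfolding clamped_densities_def
  by (intro closed_Collect_all closed_Collect_conj closed_Collect_eq closed_Collect_le
      continuous_on_eval_bcontfun continuous_on_const)

lemma clamped_densities_admissible: "F \<in> clamped_densities R \<Longrightarrow> admissible_density R F"
  unfolding clamped_densities_def admissible_density_def by auto

context
  fixes R :: real
  assumes R_pos: "0 < R" and R_small: "R \<le> 1/100"
begin

lemma radius_squared_le: "R^2 \<le> 1/10000"
proof -
  have "R^2 \<le> (1/100)^2" using R_pos R_small by (intro power_mono) auto
  then show ?thesis by (simp add: power2_eq_square)
qed

lemma tov_rho_decay_bounds: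
  assumes "admissible_density R \<rho>" "s \<in> {0..R}"
  shows "0 \<le> tov_rho_decay \<rho> s" "tov_rho_decay \<rho> s \<le> 132 * s"
proof (atomize (full), cases "s = 0")
  case False
  then have "0 < s" "s \<le> 1/100" using assms(2) R_small by auto
  then show "0 \<le> tov_rho_decay \<rho> s \<and> tov_rho_decay \<rho> s \<le> 132 * s"
    unfolding tov_rho_decay_def
    using minus_tov_rho_rhs_bounds tov_mass_admissible_bounds[OF assms] admissible_density_bounds[OF assms]
    by blast
qed (simp add: tov_rho_decay_def tov_rho_rhs_def)

lemma tov_rho_decay_lipschitz:
  assumes "admissible_density R \<rho>" "admissible_density R \<sigma>"
    "\<And>x. x \<in> {0..R} \<Longrightarrow> \<bar>\<rho> x - \<sigma> x\<bar> \<le> d" "s \<in> {0..R}"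
  shows "\<bar>tov_rho_decay \<rho> s - tov_rho_decay \<sigma> s\<bar> \<le> 300 * s * d"
proof (cases "s = 0")
  case False
  then have s: "0 < s" "s \<le> 1/100" using assms(4) R_small by auto
  have "0 \<le> d" using assms(3)[of 0] R_pos by force
  have "\<bar>tov_mass \<rho> s - tov_mass \<sigma> s\<bar> \<le> 4*pi/3 * d * s^3"
    using tov_mass_lipschitz[OF admissible_density_continuous[OF assms(1)]
        admissible_density_continuous[OF assms(2)] assms(4,3)] .
  also have "\<dots> \<le> 5 * s^3 * d"
  proof -
    have "(4*pi/3) * (d * s^3) \<le> 5 * (d * s^3)"
      using pi_approx(2) \<open>0 \<le> d\<close> s by (intro mult_right_mono) auto
    then show ?thesis by (simp add: mult_ac)
  qed
  finally have "\<bar>tov_mass \<rho> s - tov_mass \<sigma> s\<bar> \<le> 5 * s^3 * d" .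
  then show ?thesis
    unfolding tov_rho_decay_def
    using tov_rho_rhs_lipschitz[OF s tov_mass_admissible_bounds[OF assms(1,4)]
        admissible_density_bounds[OF assms(1,4)] tov_mass_admissible_bounds[OF assms(2,4)]
        admissible_density_bounds[OF assms(2,4)] assms(3)[OF assms(4)]]
    by linarith
qed (simp add: tov_rho_decay_def tov_rho_rhs_def)

lemma tov_rho_decay_continuous:
  assumes "admissible_density R \<rho>"
  shows "continuous_on {0..R} (tov_rho_decay \<rho>)"
  unfolding continuous_on_eq_continuous_within
proof
  fix x assume x: "x \<in> {0..R}"
  show "continuous (at x within {0..R}) (tov_rho_decay \<rho>)"
  proof (cases "x = 0")
    case True
    have "\<bar>tov_rho_decay \<rho> y\<bar> \<le> 132 * \<bar>y\<bar>" if "y \<in> {0..R}" for y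
      using tov_rho_decay_bounds[OF assms that] that by auto
    then show ?thesis unfolding True
      by (intro continuous_within_zero_if_linear_bound) (simp_all add: tov_rho_decay_def tov_rho_rhs_def)
  next
    case False
    have "y - 2 * tov_mass \<rho> y \<noteq> 0" if "y \<in> {0<..R}" for y
    proof -
      have "y^2 \<le> (1/100)^2" using that R_small by (intro power_mono) auto
      then have "y^3 \<le> y * (1/10000)"
        using that by (simp add: power3_eq_cube power2_eq_square mult_left_mono)
      then show ?thesis using tov_mass_admissible_bounds(2)[OF assms, of y] that by auto
    qed
    moreover have "continuous_on {0<..R} \<rho>" "continuous_on {0<..R} (tov_mass \<rho>)"
      using admissible_density_continuous[OF assms]
        tov_mass_continuous[OF admissible_density_continuous[OF assms] less_imp_le[OF R_pos]]
      by (auto elim: continuous_on_subset)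
    ultimately have "continuous_on {0<..R} (tov_rho_decay \<rho>)"
      unfolding tov_rho_decay_def tov_rho_rhs_def by (intro continuous_intros) auto
    then have "continuous (at x within {0<..R}) (tov_rho_decay \<rho>)"
      using x False by (simp add: continuous_on_eq_continuous_within)
    moreover have "at x within {0..R} = at x within {0<..R}"
      using x False by (intro at_within_nhd[of _ "{0<..}"]) auto
    ultimately show ?thesis by simp
  qed
qed

lemma tov_rho_decay_integrable:
  assumes "admissible_density R \<rho>" "0 \<le> a" "b \<le> R"
  shows "tov_rho_decay \<rho> integrable_on {a..b}"
  using tov_rho_decay_continuous[OF assms(1)] assms(2,3)
  by (intro integrable_continuous_interval) (auto elim: continuous_on_subset)

lemma integral_tov_rho_decay_bounds:
  assumes "admissible_density R \<rho>" "a \<in> {0..R}"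
  shows "0 \<le> integral {a..R} (tov_rho_decay \<rho>)" "integral {a..R} (tov_rho_decay \<rho>) \<le> 132 * R^2"
proof -
  have i: "tov_rho_decay \<rho> integrable_on {a..R}"
    using tov_rho_decay_integrable[OF assms(1)] assms(2) by auto
  have b: "0 \<le> tov_rho_decay \<rho> s" "tov_rho_decay \<rho> s \<le> 132 * R" if "s \<in> {a..R}" for s
    using tov_rho_decay_bounds[OF assms(1), of s] that assms(2) by auto
  show "0 \<le> integral {a..R} (tov_rho_decay \<rho>)" using i b(1) by (rule integral_nonneg)
  have "integral {a..R} (tov_rho_decay \<rho>) \<le> integral {a..R} (\<lambda>_. 132 * R)"
    using i b by (intro integral_le) auto
  also have "\<dots> \<le> R * (132 * R)" using assms(2) R_pos by (simp add: mult_right_mono)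
  finally show "integral {a..R} (tov_rho_decay \<rho>) \<le> 132 * R^2" by (simp add: power2_eq_square)
qed

lemma integral_tov_rho_decay_lipschitz:
  assumes "admissible_density R \<rho>" "admissible_density R \<sigma>"
    "\<And>x. x \<in> {0..R} \<Longrightarrow> \<bar>\<rho> x - \<sigma> x\<bar> \<le> d" "a \<in> {0..R}"
  shows "\<bar>integral {a..R} (tov_rho_decay \<rho>) - integral {a..R} (tov_rho_decay \<sigma>)\<bar> \<le> 300 * R^2 * d"
proof -
  have "0 \<le> d" using assms(3)[of 0] R_pos by force
  have i1: "tov_rho_decay \<rho> integrable_on {a..R}" and i2: "tov_rho_decay \<sigma> integrable_on {a..R}"
    using tov_rho_decay_integrable assms(1,2,4) by auto
  have "norm (tov_rho_decay \<rho> s - tov_rho_decay \<sigma> s) \<le> 300 * R * d" if "s \<in> {a..R}" for s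
  proof -
    have "300 * s * d \<le> 300 * R * d" using that \<open>0 \<le> d\<close> by (intro mult_right_mono) auto
    then show ?thesis using tov_rho_decay_lipschitz[OF assms(1-3), of s] that assms(4) by simp
  qed
  then have "norm (integral {a..R} (\<lambda>s. tov_rho_decay \<rho> s - tov_rho_decay \<sigma> s))
      \<le> integral {a..R} (\<lambda>_. 300 * R * d)"
    by (intro integral_norm_bound_integral integrable_diff[OF i1 i2]) auto
  also have "\<dots> = (R - a) * (300 * R * d)" using assms(4) by simp
  also have "\<dots> \<le> R * (300 * R * d)"
    using assms(4) R_pos \<open>0 \<le> d\<close> by (intro mult_right_mono) auto
  finally show ?thesis
    unfolding integral_diff[OF i1 i2, symmetric] by (simp add: power2_eq_square mult_ac)
qed

lemma picard_map_bounds: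
  assumes "admissible_density R \<rho>"
  shows "1 \<le> picard_map R \<rho> x" "picard_map R \<rho> x \<le> 1 + 132 * R^2" "picard_map R \<rho> x \<le> 2"
proof -
  have "132 * R^2 \<le> 1" using radius_squared_le by simp
  then show "1 \<le> picard_map R \<rho> x" "picard_map R \<rho> x \<le> 1 + 132 * R^2" "picard_map R \<rho> x \<le> 2"
    using integral_tov_rho_decay_bounds[OF assms clamp_radius_in_interval, of x] R_pos
    unfolding picard_map_def by auto
qed

lemma picard_map_continuous:
  assumes "admissible_density R \<rho>"
  shows "continuous_on UNIV (picard_map R \<rho>)"
proof -
  have split: "picard_map R \<rho> x
      = 1 + (integral {0..R} (tov_rho_decay \<rho>) - integral {0..clamp_radius R x} (tov_rho_decay \<rho>))"
    for x
  proof -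
    have "integral {0..clamp_radius R x} (tov_rho_decay \<rho>) + integral {clamp_radius R x..R} (tov_rho_decay \<rho>)
        = integral {0..R} (tov_rho_decay \<rho>)"
      using clamp_radius_in_interval[of R x] R_pos tov_rho_decay_integrable[OF assms, of 0 R]
      by (intro Henstock_Kurzweil_Integration.integral_combine) auto
    then show ?thesis unfolding picard_map_def by linarith
  qed
  have J: "continuous_on {0..R} (\<lambda>a. integral {0..a} (tov_rho_decay \<rho>))"
    using tov_rho_decay_integrable[OF assms, of 0 R]
    by (intro indefinite_integral_continuous_1) auto
  have "continuous_on UNIV (clamp_radius R)" unfolding clamp_radius_def by (intro continuous_intros)
  then have "continuous_on UNIV (\<lambda>x. integral {0..clamp_radius R x} (tov_rho_decay \<rho>))"
    by (rule continuous_on_compose2[OF J]) (use clamp_radius_in_interval R_pos in auto)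
  then have "continuous_on UNIV (\<lambda>x. 1 + (integral {0..R} (tov_rho_decay \<rho>)
      - integral {0..clamp_radius R x} (tov_rho_decay \<rho>)))"
    by (intro continuous_intros)
  then show ?thesis using split by simp
qed

lemma picard_bcontfun_apply:
  assumes "F \<in> clamped_densities R"
  shows "apply_bcontfun (picard_bcontfun R F) = picard_map R F"
proof -
  note adm = clamped_densities_admissible[OF assms]
  have "\<bar>picard_map R F x\<bar> \<le> 2" for x using picard_map_bounds(1,3)[OF adm, of x] by linarith
  then have "picard_map R F \<in> bcontfun" by (intro bcontfun_normI[OF picard_map_continuous[OF adm]]) simp
  then show ?thesis unfolding picard_bcontfun_def by (simp add: Bcontfun_inverse)
qed

lemma picard_bcontfun_maps_into: "picard_bcontfun R ` clamped_densities R \<subseteq> clamped_densities R"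
proof clarify
  fix F assume F: "F \<in> clamped_densities R"
  have "picard_map R F x = picard_map R F (clamp_radius R x)" for x
    unfolding picard_map_def using clamp_radius_eq_self[OF clamp_radius_in_interval] R_pos by simp
  then show "picard_bcontfun R F \<in> clamped_densities R"
    using picard_map_bounds[OF clamped_densities_admissible[OF F]]
    unfolding clamped_densities_def mem_Collect_eq picard_bcontfun_apply[OF F] by blast
qed

lemma picard_bcontfun_contraction:
  assumes "F \<in> clamped_densities R" "G \<in> clamped_densities R"
  shows "dist (picard_bcontfun R F) (picard_bcontfun R G) \<le> 1/20 * dist F G"
proof (rule dist_bound)
  fix x
  have "\<bar>F y - G y\<bar> \<le> dist F G" for y using dist_bounded[of F y G] by (simp add: dist_real_def)
  then have "\<bar>picard_map R F x - picard_map R G x\<bar> \<le> 300 * R^2 * dist F G"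
    unfolding picard_map_def
    using integral_tov_rho_decay_lipschitz[OF clamped_densities_admissible[OF assms(1)]
        clamped_densities_admissible[OF assms(2)] _ clamp_radius_in_interval] R_pos
    by simp
  also have "\<dots> \<le> 1/20 * dist F G"
  proof -
    have "300 * R^2 \<le> 1/20" using radius_squared_le by simp
    then show ?thesis by (intro mult_right_mono) auto
  qed
  finally show "dist (picard_bcontfun R F x) (picard_bcontfun R G x) \<le> 1/20 * dist F G"
    unfolding picard_bcontfun_apply[OF assms(1)] picard_bcontfun_apply[OF assms(2)]
    by (simp add: dist_real_def)
qed

lemma picard_map_has_fixpoint:
  obtains \<rho> where "admissible_density R \<rho>" "\<And>x. picard_map R \<rho> x = \<rho> x"
proof -
  have "const_bcontfun 1 \<in> clamped_densities R"
    unfolding clamped_densities_def by (simp add: const_bcontfun.rep_eq)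
  then obtain F where "F \<in> clamped_densities R" "picard_bcontfun R F = F"
    using Banach_fix[OF complete_eq_closed[THEN iffD2, OF closed_clamped_densities] _ _ _
        picard_bcontfun_maps_into picard_bcontfun_contraction] by auto
  then show ?thesis
    using that clamped_densities_admissible picard_bcontfun_apply by metis
qed

lemma picard_fixpoint_is_static_hard_star:
  assumes adm: "admissible_density R \<rho>" and fixed: "\<And>x. picard_map R \<rho> x = \<rho> x"
  shows "static_hard_star R 132 (tov_mass \<rho>) \<rho>"
proof -
  note cont = admissible_density_continuous[OF adm]
  note decay_cont = tov_rho_decay_continuous[OF adm]
  have \<rho>_eq: "\<rho> x = 1 + integral {x..R} (tov_rho_decay \<rho>)" if "x \<in> {0..R}" for x
    using fixed[of x] clamp_radius_eq_self[OF that] unfolding picard_map_def by simp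
  have \<rho>_bounds: "1 \<le> \<rho> x" "\<rho> x \<le> 1 + 132 * R^2" for x
    using picard_map_bounds[OF adm, of x] fixed[of x] by auto
  have "(\<rho> has_real_derivative tov_rho_rhs r (tov_mass \<rho> r) (\<rho> r)) (at r within {0..R})"
    if "r \<in> {0..R}" for r
  proof -
    have "((\<lambda>x. 1 + integral {x..R} (tov_rho_decay \<rho>)) has_real_derivative
        tov_rho_rhs r (tov_mass \<rho> r) (\<rho> r)) (at r within {0..R})"
      using integral_has_real_derivative'[OF decay_cont that]
      by (auto intro!: derivative_eq_intros simp: tov_rho_decay_def)
    then show ?thesis by (rule has_field_derivative_transform_within[where d=1]) (use that \<rho>_eq in auto)
  qed
  moreover have "antimono_on {0..R} \<rho>"
  proof (rule monotone_onI)
    fix x y assume xy: "x \<in> {0..R}" "y \<in> {0..R}" "x \<le> y"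
    have "integral {y..R} (tov_rho_decay \<rho>) \<le> integral {x..R} (tov_rho_decay \<rho>)"
      using xy tov_rho_decay_bounds(1)[OF adm]
      by (intro integral_subset_le tov_rho_decay_integrable[OF adm]) auto
    then show "\<rho> y \<le> \<rho> x" using \<rho>_eq[OF xy(1)] \<rho>_eq[OF xy(2)] by linarith
  qed
  moreover have "mono_on {0..R} (tov_mass \<rho>)"
    using \<rho>_bounds(1) by (intro tov_mass_mono[OF cont]) (auto intro: order_trans[OF zero_le_one])
  moreover have "1 \<le> 3 / (4*pi) * (tov_mass \<rho> r / r^3)"
    "3 / (4*pi) * (tov_mass \<rho> r / r^3) \<le> 1 + 132 * R^2" if "r \<in> {0<..R}" for r
  proof -
    have "4*pi/3 * 1 * r^3 \<le> tov_mass \<rho> r" "tov_mass \<rho> r \<le> 4*pi/3 * (1 + 132 * R^2) * r^3"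
      using tov_mass_bounds[OF cont, of r 1 "1 + 132 * R^2"] \<rho>_bounds that by auto
    moreover have "0 < r^3" using that by simp
    ultimately show "1 \<le> 3 / (4*pi) * (tov_mass \<rho> r / r^3)"
      "3 / (4*pi) * (tov_mass \<rho> r / r^3) \<le> 1 + 132 * R^2"
      by (simp_all add: field_simps)
  qed
  ultimately show ?thesis
    unfolding static_hard_star_def tov_m_rhs_def
    using cont tov_mass_continuous[OF cont] tov_mass_has_derivative[OF cont] \<rho>_bounds \<rho>_eq[of R] R_pos
    by (auto simp: tov_mass_def)
qed

end

lemma static_hard_star_exists:
  assumes "0 < R" "R \<le> 1/100"
  shows "\<exists>m \<rho>. static_hard_star R 132 m \<rho>"
  using picard_map_has_fixpoint[OF assms] picard_fixpoint_is_static_hard_star[OF assms] by metis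

theorem proposition2p1:
  "\<exists>R0 C :: real. 0 < R0 \<and> R0 < sqrt (3 / (4 * pi)) \<and> 0 < C \<and>
     (\<forall>R. 0 < R \<and> R < R0 \<longrightarrow>
       (\<exists>m \<rho> :: real \<Rightarrow> real.
          continuous_on {0..R} m \<and> continuous_on {0..R} \<rho> \<and>
          (\<forall>r \<in> {0<..R}.
             (m has_real_derivative tov_m_rhs r (m r) (\<rho> r)) (at r within {0..R}) \<and>
             (\<rho> has_real_derivative tov_rho_rhs r (m r) (\<rho> r)) (at r within {0..R})) \<and>
          antimono_on {0..R} \<rho> \<and> mono_on {0..R} m \<and>
          (\<forall>r \<in> {0..R}. 1 \<le> \<rho> r \<and> \<rho> r \<le> 1 + C * R^2) \<and>
          \<rho> R = 1 \<and> m 0 = 0 \<and>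
          (\<forall>r \<in> {0<..R}. 1 \<le> 3 / (4 * pi) * (m r / r^3) \<and>
                          3 / (4 * pi) * (m r / r^3) \<le> 1 + C * R^2)))"
proof -
  have "(1/100::real)^2 < 3 / (4 * pi)" using pi_less_4 pi_gt_zero by (simp add: field_simps)
  then have "1/100 < sqrt (3 / (4 * pi))" by (rule real_less_rsqrt)
  moreover have "\<exists>m \<rho>. static_hard_star R 132 m \<rho>" if "0 < R \<and> R < 1/100" for R
    using static_hard_star_exists that by simp
  ultimately show ?thesis
    unfolding static_hard_star_def by (intro exI[of _ "1/100"] exI[of _ 132]) auto
qed

end
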